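(* Let $n\ge 5$ and let $G$ be a graph on $n$ vertices with non-negative integer edge weights such that every subgraph spanned by at least $4$ vertices has total weight at least $3$. Then there is a vertex $v$ of $G$ with $d(v)\ge \tfrac{2}{3}n-\tfrac{4}{3}$.
   Context: The total weight of a subgraph is the sum of its edge weights; the subgraph spanned by a vertex set consists of those vertices and all edges between them. For a vertex $v$, $d(v)=\sum_{u\ne v}\operatorname{wt}(uv)$ is the sum of the weights of edges incident to $v$ (a missing edge has weight $0$). *)

theory Defs
  imports Complex_Main
begin

text \<open>A weighted graph on a finite vertex set V is given by a symmetric weight
function w on pairs of vertices with values in nat (non-negative integers);
only pairs of distinct vertices matter; a missing edge has weight 0.\<close>

definition total_weight :: "('a \<Rightarrow> 'a \<Rightarrow> nat) \<Rightarrow> 'a set \<Rightarrow> nat" where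
  "total_weight w S = (\<Sum>(u,v)\<in>{(u,v). u \<in> S \<and> v \<in> S \<and> u \<noteq> v}. w u v) div 2"

definition wdeg :: "('a \<Rightarrow> 'a \<Rightarrow> nat) \<Rightarrow> 'a set \<Rightarrow> 'a \<Rightarrow> nat" where
  "wdeg w V v = (\<Sum>u\<in>V - {v}. w u v)"

end

theory Submission
  imports Defs
begin

text \<open>Fix a vertex x and let A be the set of its non-neighbours. If two vertices z, t of A
are joined by weight at most 1, then every further vertex u spans with x, z, t a 4-set, so
w(ux) + w(uz) + w(ut) \<ge> 3 - w(zt); summing over the n - 3 choices of u gives
d(x) + d(z) + d(t) \<ge> 2n - 4. Otherwise all pairs in A have weight at least 2, so any z in A
has d(z) \<ge> 2(|A| - 1), while d(x) \<ge> n - 1 - |A|; hence d(z) + 2 d(x) \<ge> 2n - 4.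
In both cases some vertex v has 3 d(v) \<ge> 2n - 4.\<close>

definition non_neighbours :: "('a \<Rightarrow> 'a \<Rightarrow> nat) \<Rightarrow> 'a set \<Rightarrow> 'a \<Rightarrow> 'a set" where
  "non_neighbours w V x = {u \<in> V - {x}. w u x = 0}"

lemma total_weight_four:
  assumes sym: "\<And>u v. w u v = w v u" and dist: "distinct [a, b, c, e]"
  shows "total_weight w {a, b, c, e} = w a b + w a c + w a e + w b c + w b e + w c e"
proof -
  let ?S = "{a, b, c, e}"
  have pairs: "{(u, v). u \<in> ?S \<and> v \<in> ?S \<and> u \<noteq> v} = Sigma ?S (\<lambda>u. ?S - {u})" by auto
  have rest: "?S - {a} = {b, c, e}" "?S - {b} = {a, c, e}" "?S - {c} = {a, b, e}" "?S - {e} = {a, b, c}"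
    using dist by auto
  have "(\<Sum>(u, v)\<in>Sigma ?S (\<lambda>u. ?S - {u}). w u v) = (\<Sum>u\<in>?S. \<Sum>v\<in>?S - {u}. w u v)"
    by (rule sum.Sigma[symmetric]) auto
  also have "\<dots> = 2 * (w a b + w a c + w a e + w b c + w b e + w c e)"
    using dist by (simp add: rest sym[of b a] sym[of c a] sym[of e a] sym[of c b] sym[of e b] sym[of e c])
  finally show ?thesis unfolding total_weight_def pairs by simp
qed

lemma wdeg_ge_sum_subset:
  assumes "finite V" and "A \<subseteq> V - {x}"
  shows "(\<Sum>u\<in>A. w u x) \<le> wdeg w V x"
  unfolding wdeg_def using assms by (intro sum_mono2) auto

lemma card_le_wdeg_add_card_non_neighbours:
  assumes "finite V"
  shows "card (V - {x}) \<le> wdeg w V x + card (non_neighbours w V x)"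
proof -
  have "card (V - {x}) = (\<Sum>u\<in>V - {x}. 1)" by simp
  also have "\<dots> \<le> (\<Sum>u\<in>V - {x}. w u x + (if w u x = 0 then 1 else 0))"
    by (intro sum_mono) auto
  also have "\<dots> = wdeg w V x + card (non_neighbours w V x)"
    unfolding wdeg_def non_neighbours_def card_eq_sum sum.distrib
    using assms by (subst sum.inter_filter) auto
  finally show ?thesis .
qed

lemma wdeg_split:
  assumes "finite V" "S \<subseteq> V" "x \<in> S"
  shows "wdeg w V x = (\<Sum>u\<in>S - {x}. w u x) + (\<Sum>u\<in>V - S. w u x)"
proof -
  have split: "V - {x} = (S - {x}) \<union> (V - S)" using assms by auto
  show ?thesis unfolding wdeg_def split
    using assms by (intro sum.union_disjoint) (auto intro: finite_subset)
qed

lemma wdeg_triple_sum: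
  assumes fin: "finite V" and sym: "\<And>u v. w u v = w v u"
    and V: "x \<in> V" "y \<in> V" "z \<in> V" and dist: "distinct [x, y, z]"
  shows "wdeg w V x + wdeg w V y + wdeg w V z
    = (\<Sum>u\<in>V - {x, y, z}. w u x + w u y + w u z) + 2 * (w x y + w x z + w y z)"
proof -
  let ?U = "V - {x, y, z}"
  have S: "{x, y, z} \<subseteq> V" using V by simp
  have "wdeg w V x = w y x + w z x + (\<Sum>u\<in>?U. w u x)"
    "wdeg w V y = w x y + w z y + (\<Sum>u\<in>?U. w u y)"
    "wdeg w V z = w x z + w y z + (\<Sum>u\<in>?U. w u z)"
    using wdeg_split[OF fin S, of x w] wdeg_split[OF fin S, of y w] wdeg_split[OF fin S, of z w] dist
    by (auto simp: insert_Diff_if)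
  thus ?thesis by (simp add: sum.distrib sym[of y x] sym[of z x] sym[of z y])
qed

lemma wdeg_triple_ge_if_light:
  assumes fin: "finite V" and card: "card V = n" and n5: "n \<ge> 5"
    and sym: "\<And>u v. w u v = w v u"
    and dense: "\<And>S. S \<subseteq> V \<Longrightarrow> card S \<ge> 4 \<Longrightarrow> total_weight w S \<ge> 3"
    and V: "x \<in> V" "y \<in> V" "z \<in> V" and dist: "distinct [x, y, z]"
    and light: "w x y + w x z + w y z \<le> 1"
  shows "2 * n - 4 \<le> wdeg w V x + wdeg w V y + wdeg w V z"
proof -
  let ?U = "V - {x, y, z}" and ?s = "w x y + w x z + w y z"
  have card_U: "card ?U = n - 3"
    using fin card V dist by (simp add: card_Diff_subset)
  have four_set: "3 \<le> w u x + w u y + w u z + ?s" if "u \<in> ?U" for u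
  proof -
    have dist4: "distinct [x, y, z, u]" using that dist by auto
    hence "3 \<le> total_weight w {x, y, z, u}"
      using that V by (intro dense) auto
    thus ?thesis by (simp add: total_weight_four[OF sym dist4] sym[of x u] sym[of y u] sym[of z u])
  qed
  have "(\<Sum>u\<in>?U. 3) \<le> (\<Sum>u\<in>?U. w u x + w u y + w u z + ?s)"
    using four_set by (rule sum_mono)
  hence "3 * (n - 3) \<le> (\<Sum>u\<in>?U. w u x + w u y + w u z + ?s)"
    by (simp add: card_U)
  hence "3 * (n - 3) \<le> (\<Sum>u\<in>?U. w u x + w u y + w u z) + (n - 3) * ?s"
    by (simp add: sum.distrib card_U)
  moreover have "?s = 0 \<or> ?s = 1" using light by linarith
  \<comment> \<open>the degree sum is at least 3(n - 3) - (n - 5) s\<close>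
  ultimately show ?thesis
    using wdeg_triple_sum[OF fin sym V dist] n5 by auto
qed

lemma wdeg_ge_if_non_neighbours_heavy:
  assumes fin: "finite V" and card: "card V = n" and "x \<in> V"
    and heavy: "\<And>y z. y \<in> non_neighbours w V x \<Longrightarrow> z \<in> non_neighbours w V x \<Longrightarrow> y \<noteq> z
      \<Longrightarrow> 2 \<le> w y z"
  shows "\<exists>v\<in>V. 2 * n - 4 \<le> 3 * wdeg w V v"
proof -
  let ?A = "non_neighbours w V x"
  have finA: "finite ?A" using fin by (simp add: non_neighbours_def)
  have deg_x: "n - 1 \<le> wdeg w V x + card ?A"
    using card_le_wdeg_add_card_non_neighbours[OF fin, of x w] card \<open>x \<in> V\<close> fin by simp
  show ?thesis
  proof (cases "?A = {}")
    case True
    thus ?thesis using deg_x \<open>x \<in> V\<close> by (intro bexI[of _ x]) auto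
  next
    case False
    then obtain z where zA: "z \<in> ?A" by auto
    have "2 * (card ?A - 1) = (\<Sum>u\<in>?A - {z}. 2)" using finA zA by simp
    also have "\<dots> \<le> (\<Sum>u\<in>?A - {z}. w u z)" using heavy zA by (intro sum_mono) auto
    also have "\<dots> \<le> wdeg w V z"
      using fin by (intro wdeg_ge_sum_subset) (auto simp: non_neighbours_def)
    finally have "2 * n - 4 \<le> wdeg w V z + 2 * wdeg w V x" using deg_x by linarith
    hence "2 * n - 4 \<le> 3 * wdeg w V z \<or> 2 * n - 4 \<le> 3 * wdeg w V x" by linarith
    moreover have "z \<in> V" using zA by (simp add: non_neighbours_def)
    ultimately show ?thesis using \<open>x \<in> V\<close> by blast
  qed
qed

theorem lemma7p6:
  fixes V :: "'a set" and w :: "'a \<Rightarrow> 'a \<Rightarrow> nat" and n :: nat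
  assumes "finite V" and "card V = n" and "n \<ge> 5"
    and "\<And>u v. w u v = w v u"
    and "\<And>S. S \<subseteq> V \<Longrightarrow> card S \<ge> 4 \<Longrightarrow> total_weight w S \<ge> 3"
  shows "\<exists>v\<in>V. real (wdeg w V v) \<ge> 2 / 3 * real n - 4 / 3"
proof -
  note sym = assms(4)
  obtain x where x: "x \<in> V" using assms(2,3) by fastforce
  have "\<exists>v\<in>V. 2 * n - 4 \<le> 3 * wdeg w V v"
  proof (cases "\<exists>z\<in>non_neighbours w V x. \<exists>t\<in>non_neighbours w V x. z \<noteq> t \<and> w z t \<le> 1")
    case True
    then obtain z t where z: "z \<in> V" "z \<noteq> x" "w z x = 0" and t: "t \<in> V" "t \<noteq> x" "w t x = 0"
      and "z \<noteq> t" "w z t \<le> 1"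
      by (auto simp: non_neighbours_def)
    hence "2 * n - 4 \<le> wdeg w V x + wdeg w V z + wdeg w V t"
      using sym[of x z] sym[of x t]
      by (intro wdeg_triple_ge_if_light[OF assms x z(1) t(1)]) auto
    hence "2 * n - 4 \<le> 3 * wdeg w V x \<or> 2 * n - 4 \<le> 3 * wdeg w V z \<or> 2 * n - 4 \<le> 3 * wdeg w V t"
      by linarith
    thus ?thesis using x z(1) t(1) by blast
  next
    case False
    show ?thesis
      by (rule wdeg_ge_if_non_neighbours_heavy[OF assms(1,2) x]) (use False in force)
  qed
  then obtain v where "v \<in> V" "2 * n - 4 \<le> 3 * wdeg w V v" by blast
  moreover have "real (2 * n - 4) = 2 * real n - 4" using assms(3) by simp
  ultimately show ?thesis by (intro bexI[of _ v]) linarith+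
qed

end
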